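(* Let $\sigma^2>0$, $\boldsymbol\beta\in\mathbb{R}^p$ not identically zero with $\beta_1\le\beta_2\le\cdots\le\beta_p$, $\delta_1^2,\dots,\delta_p^2>0$ with $\sum_{i=1}^p\beta_i/\delta_i^2\ge0$, and $\Sigma=\sigma^2\boldsymbol\beta\boldsymbol\beta^\top+\mathrm{diag}(\delta_1^2,\dots,\delta_p^2)$. Let $w$ be the long-only minimum variance portfolio (the minimizer of $w^\top\Sigma w$ subject to $\sum_i w_i=1$, $w_i\ge0$), $K=\{i:w_i>0\}$, $k=|K|$, and $C_K=\sum_{j\in K}\beta_j/\delta_j^2$. Then $K=\{1,2,\dots,k\}$ and $C_K\ge0$. *)

theory Defs
  imports Main "HOL-Analysis.Analysis"
begin

text \<open>Vectors in R^p and p x p matrices are represented as functions on the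
index set {1..p}. Covariance matrix Sigma = sigma^2 beta beta^T + diag(delta_1^2,...,delta_p^2).\<close>

definition one_factor_cov :: "real \<Rightarrow> (nat \<Rightarrow> real) \<Rightarrow> (nat \<Rightarrow> real) \<Rightarrow> nat \<Rightarrow> nat \<Rightarrow> real" where
  "one_factor_cov s2 \<beta> d2 i j = s2 * \<beta> i * \<beta> j + (if i = j then d2 i else 0)"

definition quad_form :: "nat \<Rightarrow> (nat \<Rightarrow> nat \<Rightarrow> real) \<Rightarrow> (nat \<Rightarrow> real) \<Rightarrow> real" where
  "quad_form p S w = (\<Sum>i=1..p. \<Sum>j=1..p. w i * S i j * w j)"

definition long_only :: "nat \<Rightarrow> (nat \<Rightarrow> real) \<Rightarrow> bool" where
  "long_only p w \<longleftrightarrow> (\<forall>i\<in>{1..p}. w i \<ge> 0) \<and> (\<Sum>i=1..p. w i) = 1"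

definition is_LO_minvar :: "nat \<Rightarrow> (nat \<Rightarrow> nat \<Rightarrow> real) \<Rightarrow> (nat \<Rightarrow> real) \<Rightarrow> bool" where
  "is_LO_minvar p S w \<longleftrightarrow> long_only p w \<and> (\<forall>v. long_only p v \<longrightarrow> quad_form p S w \<le> quad_form p S v)"

end

theory Submission
  imports Defs
begin

(* The first-order (KKT) conditions of the long-only minimum variance problem say that
   (Sigma w)_k equals the minimal variance mu on the support K of w and is at least mu off it.
   In the one-factor model (Sigma w)_k = sigma^2 beta_k B + delta_k^2 w_k with exposure B = beta^T w,
   so solving for w on K gives mu C_K = B (1 + sigma^2 sum_{k in K} beta_k^2 / delta_k^2):
   C_K and B have the same sign. If B < 0, every excluded asset j has sigma^2 beta_j B >= mu > 0,
   hence beta_j < 0, and then C_K >= sum_i beta_i / delta_i^2 >= 0, a contradiction. So B >= 0, and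
   an excluded j below an included i is impossible:
   mu <= sigma^2 beta_j B <= sigma^2 beta_i B < sigma^2 beta_i B + delta_i^2 w_i = mu. *)

definition mat_vec :: "nat \<Rightarrow> (nat \<Rightarrow> nat \<Rightarrow> real) \<Rightarrow> (nat \<Rightarrow> real) \<Rightarrow> nat \<Rightarrow> real" where
  "mat_vec p S w i = (\<Sum>j=1..p. S i j * w j)"

definition symmetric_matrix :: "nat \<Rightarrow> (nat \<Rightarrow> nat \<Rightarrow> real) \<Rightarrow> bool" where
  "symmetric_matrix p S \<longleftrightarrow> (\<forall>i\<in>{1..p}. \<forall>j\<in>{1..p}. S i j = S j i)"

lemma quad_form_eq_sum_mat_vec: "quad_form p S w = (\<Sum>i=1..p. w i * mat_vec p S w i)"
  unfolding quad_form_def mat_vec_def by (simp add: sum_distrib_left mult.assoc)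

lemma quad_form_add_scaled:
  assumes sym: "symmetric_matrix p S"
  shows "quad_form p S (\<lambda>k. w k + t * u k)
           = quad_form p S w + 2 * t * (\<Sum>i=1..p. u i * mat_vec p S w i) + t\<^sup>2 * quad_form p S u"
proof -
  have "S i j = S j i" if "i \<in> {1..p}" "j \<in> {1..p}" for i j
    using sym that by (simp add: symmetric_matrix_def)
  then have cross: "(\<Sum>i=1..p. \<Sum>j=1..p. w i * S i j * u j) = (\<Sum>i=1..p. u i * mat_vec p S w i)"
    unfolding mat_vec_def sum_distrib_left
    by (subst sum.swap) (auto intro!: sum.cong)
  have "quad_form p S (\<lambda>k. w k + t * u k)
          = quad_form p S w + t * (\<Sum>i=1..p. \<Sum>j=1..p. w i * S i j * u j)
            + t * (\<Sum>i=1..p. u i * mat_vec p S w i) + t\<^sup>2 * quad_form p S u"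
    unfolding quad_form_def mat_vec_def
    by (simp add: algebra_simps power2_eq_square sum.distrib sum_distrib_left)
  then show ?thesis
    using cross by simp
qed

lemma nonneg_linear_coeff_of_nonneg_near_zero:
  fixes T L M :: real
  assumes "T > 0" and near_zero: "\<And>t. 0 < t \<Longrightarrow> t \<le> T \<Longrightarrow> 0 \<le> t * L + t\<^sup>2 * M"
  shows "L \<ge> 0"
proof (rule ccontr)
  assume "\<not> L \<ge> 0"
  define t where "t = min T (- L / (2 * \<bar>M\<bar> + 1))"
  have "t > 0" "t \<le> T"
    using \<open>T > 0\<close> \<open>\<not> L \<ge> 0\<close> by (auto simp: t_def intro!: divide_neg_pos)
  have "t * M \<le> t * \<bar>M\<bar>"
    using \<open>t > 0\<close> by (simp add: mult_left_mono)
  also have "\<dots> \<le> - L / (2 * \<bar>M\<bar> + 1) * \<bar>M\<bar>"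
    unfolding t_def by (intro mult_right_mono) auto
  also have "\<dots> \<le> - L / 2"
    using \<open>\<not> L \<ge> 0\<close> by (simp add: field_simps)
  finally have "L + t * M < 0"
    using \<open>\<not> L \<ge> 0\<close> by linarith
  then have "t * (L + t * M) < 0"
    using \<open>t > 0\<close> by (simp add: mult_pos_neg)
  with near_zero[OF \<open>t > 0\<close> \<open>t \<le> T\<close>] show False
    by (simp add: power2_eq_square algebra_simps)
qed

lemma long_only_ex_pos:
  assumes "long_only p w"
  obtains k where "k \<in> {1..p}" "w k > 0"
proof -
  have "\<not> (\<forall>k\<in>{1..p}. w k = 0)"
    using assms unfolding long_only_def by (metis sum.neutral zero_neq_one)
  then obtain k where "k \<in> {1..p}" "w k \<noteq> 0"
    by blast
  with assms that show thesis
    by (simp add: long_only_def order.not_eq_order_implies_strict)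
qed

lemma long_only_shift:
  assumes "long_only p w" "i \<in> {1..p}" "j \<in> {1..p}" "i \<noteq> j" "0 \<le> t" "t \<le> w i"
  shows "long_only p (\<lambda>k. w k + t * ((if k = j then 1 else 0) - (if k = i then 1 else 0)))"
  unfolding long_only_def
proof
  show "\<forall>k\<in>{1..p}. 0 \<le> w k + t * ((if k = j then 1 else 0) - (if k = i then 1 else 0))"
    using assms by (auto simp: long_only_def)
  have "(\<Sum>k=1..p. w k + t * ((if k = j then 1 else 0) - (if k = i then 1 else 0)))
      = (\<Sum>k=1..p. w k) + t * ((\<Sum>k=1..p. if k = j then 1 else 0) - (\<Sum>k=1..p. if k = i then 1 else 0))"
    by (simp only: sum.distrib sum_distrib_left sum_subtractf right_diff_distrib)
  with assms show "(\<Sum>k=1..p. w k + t * ((if k = j then 1 else 0) - (if k = i then 1 else 0))) = 1"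
    by (simp add: long_only_def)
qed

lemma LO_minvar_mat_vec_le:
  assumes sym: "symmetric_matrix p S"
    and minvar: "is_LO_minvar p S w" and "i \<in> {1..p}" "j \<in> {1..p}" "w i > 0"
  shows "mat_vec p S w i \<le> mat_vec p S w j"
proof (cases "i = j")
  case False
  \<comment> \<open>Shift a small weight \<open>t\<close> from asset \<open>i\<close> to asset \<open>j\<close>: the variance must not decrease.\<close>
  define u :: "nat \<Rightarrow> real" where "u k = (if k = j then 1 else 0) - (if k = i then 1 else 0)" for k
  have "(\<Sum>k=1..p. u k * mat_vec p S w k)
      = (\<Sum>k=1..p. (if k = j then mat_vec p S w k else 0) - (if k = i then mat_vec p S w k else 0))"
    by (intro sum.cong) (auto simp: u_def)
  with assms have u_mat_vec: "(\<Sum>k=1..p. u k * mat_vec p S w k) = mat_vec p S w j - mat_vec p S w i"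
    by (simp add: sum_subtractf)
  have w: "long_only p w"
    using minvar by (simp add: is_LO_minvar_def)
  have "0 \<le> t * (2 * (mat_vec p S w j - mat_vec p S w i)) + t\<^sup>2 * quad_form p S u"
    if "0 < t" "t \<le> w i" for t
  proof -
    have "long_only p (\<lambda>k. w k + t * u k)"
      unfolding u_def using assms False that by (intro long_only_shift[OF w]) simp_all
    with minvar have "quad_form p S w \<le> quad_form p S (\<lambda>k. w k + t * u k)"
      unfolding is_LO_minvar_def by blast
    moreover have "quad_form p S (\<lambda>k. w k + t * u k)
        = quad_form p S w + t * (2 * (mat_vec p S w j - mat_vec p S w i)) + t\<^sup>2 * quad_form p S u"
      unfolding quad_form_add_scaled[OF sym] u_mat_vec by simp
    ultimately show ?thesis
      by linarith
  qed
  then have "0 \<le> 2 * (mat_vec p S w j - mat_vec p S w i)"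
    by (rule nonneg_linear_coeff_of_nonneg_near_zero[OF \<open>w i > 0\<close>])
  then show ?thesis
    by simp
qed simp

lemma LO_minvar_mat_vec_eq_quad_form:
  assumes sym: "symmetric_matrix p S"
    and minvar: "is_LO_minvar p S w" and "k \<in> {1..p}" "w k > 0"
  shows "mat_vec p S w k = quad_form p S w"
proof -
  have w: "long_only p w"
    using minvar by (simp add: is_LO_minvar_def)
  have "w i * mat_vec p S w i = w i * mat_vec p S w k" if "i \<in> {1..p}" for i
  proof (cases "w i > 0")
    case True
    have "mat_vec p S w i \<le> mat_vec p S w k" "mat_vec p S w k \<le> mat_vec p S w i"
      using LO_minvar_mat_vec_le[OF sym minvar] assms that True by blast+
    then show ?thesis
      by simp
  next
    case False
    then have "w i = 0"
      using w that by (force simp: long_only_def)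
    then show ?thesis
      by simp
  qed
  then have "quad_form p S w = (\<Sum>i=1..p. w i * mat_vec p S w k)"
    unfolding quad_form_eq_sum_mat_vec by (intro sum.cong) auto
  also have "\<dots> = mat_vec p S w k"
    using w by (simp add: long_only_def flip: sum_distrib_right)
  finally show ?thesis ..
qed

lemma LO_minvar_quad_form_le_mat_vec:
  assumes sym: "symmetric_matrix p S"
    and minvar: "is_LO_minvar p S w" and "j \<in> {1..p}"
  shows "quad_form p S w \<le> mat_vec p S w j"
proof -
  obtain k where k: "k \<in> {1..p}" "w k > 0"
    using minvar long_only_ex_pos by (auto simp: is_LO_minvar_def)
  then have "quad_form p S w = mat_vec p S w k"
    using LO_minvar_mat_vec_eq_quad_form[OF sym minvar] by simp
  also have "\<dots> \<le> mat_vec p S w j"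
    using LO_minvar_mat_vec_le[OF sym minvar k(1) \<open>j \<in> {1..p}\<close> k(2)] .
  finally show ?thesis .
qed

lemma symmetric_matrix_one_factor_cov: "symmetric_matrix p (one_factor_cov s2 \<beta> d2)"
  by (simp add: symmetric_matrix_def one_factor_cov_def)

lemma mat_vec_one_factor_cov:
  assumes "k \<in> {1..p}"
  shows "mat_vec p (one_factor_cov s2 \<beta> d2) w k = s2 * \<beta> k * (\<Sum>j=1..p. \<beta> j * w j) + d2 k * w k"
proof -
  have "mat_vec p (one_factor_cov s2 \<beta> d2) w k
      = (\<Sum>j=1..p. s2 * \<beta> k * (\<beta> j * w j)) + (\<Sum>j=1..p. if k = j then d2 k * w j else 0)"
    unfolding mat_vec_def one_factor_cov_def sum.distrib[symmetric]
    by (intro sum.cong) (simp_all add: algebra_simps)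
  with assms show ?thesis
    by (simp add: sum_distrib_left)
qed

lemma quad_form_one_factor_cov:
  "quad_form p (one_factor_cov s2 \<beta> d2) w = s2 * (\<Sum>k=1..p. \<beta> k * w k)\<^sup>2 + (\<Sum>k=1..p. d2 k * (w k)\<^sup>2)"
proof -
  have "quad_form p (one_factor_cov s2 \<beta> d2) w
      = (\<Sum>k=1..p. s2 * (\<Sum>j=1..p. \<beta> j * w j) * (\<beta> k * w k) + d2 k * (w k)\<^sup>2)"
    unfolding quad_form_eq_sum_mat_vec
    by (intro sum.cong) (simp_all add: mat_vec_one_factor_cov algebra_simps power2_eq_square)
  then show ?thesis
    by (simp add: sum.distrib power2_eq_square flip: sum_distrib_left)
qed

lemma eq_atLeastAtMost_card_if_downward_closed:
  fixes K :: "nat set"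
  assumes "K \<subseteq> {1..p}" and closed: "\<And>i j. i \<in> K \<Longrightarrow> 1 \<le> j \<Longrightarrow> j \<le> i \<Longrightarrow> j \<in> K"
  shows "K = {1..card K}"
proof (cases "K = {}")
  case False
  have "finite K"
    using assms(1) finite_subset by blast
  with False have "Max K \<in> K"
    by simp
  with \<open>finite K\<close> assms(1) closed have "K = {1..Max K}"
    by fastforce
  then show ?thesis
    by (metis card_atLeastAtMost diff_Suc_1)
qed simp

locale one_factor_LO_minvar =
  fixes p :: nat and s2 :: real and \<beta> d2 w :: "nat \<Rightarrow> real"
  assumes s2_nonneg: "s2 \<ge> 0"
    and d2_pos: "\<And>i. i \<in> {1..p} \<Longrightarrow> d2 i > 0"
    and minvar: "is_LO_minvar p (one_factor_cov s2 \<beta> d2) w"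
begin

definition support :: "nat set" where
  "support = {i\<in>{1..p}. w i > 0}"

definition exposure :: real where
  "exposure = (\<Sum>k=1..p. \<beta> k * w k)"

definition min_var :: real where
  "min_var = quad_form p (one_factor_cov s2 \<beta> d2) w"

lemma weight_nonneg: "k \<in> {1..p} \<Longrightarrow> w k \<ge> 0"
  using minvar by (simp add: is_LO_minvar_def long_only_def)

lemma weight_eq_zero_off_support: "j \<in> {1..p} \<Longrightarrow> j \<notin> support \<Longrightarrow> w j = 0"
  using weight_nonneg[of j] by (simp add: support_def)

lemma min_var_pos: "min_var > 0"
proof -
  obtain k where "k \<in> {1..p}" "w k > 0"
    using minvar long_only_ex_pos by (auto simp: is_LO_minvar_def)
  then have "(\<Sum>k=1..p. d2 k * (w k)\<^sup>2) > 0"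
    using d2_pos by (intro sum_pos2[of "{1..p}" k]) (auto simp: less_imp_le)
  then show ?thesis
    using s2_nonneg by (simp add: min_var_def quad_form_one_factor_cov add_nonneg_pos)
qed

lemma marginal_on_support: "k \<in> support \<Longrightarrow> s2 * \<beta> k * exposure + d2 k * w k = min_var"
  using LO_minvar_mat_vec_eq_quad_form[OF symmetric_matrix_one_factor_cov minvar]
  by (simp add: support_def exposure_def min_var_def mat_vec_one_factor_cov)

lemma marginal_off_support:
  assumes "j \<in> {1..p}" "j \<notin> support"
  shows "min_var \<le> s2 * \<beta> j * exposure"
proof -
  have "w j = 0"
    using assms by (rule weight_eq_zero_off_support)
  then show ?thesis
    using LO_minvar_quad_form_le_mat_vec[OF symmetric_matrix_one_factor_cov minvar assms(1)] assms(1)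
    by (simp add: exposure_def min_var_def mat_vec_one_factor_cov)
qed

lemma min_var_mult_support_sum:
  "min_var * (\<Sum>k\<in>support. \<beta> k / d2 k) = exposure * (1 + s2 * (\<Sum>k\<in>support. (\<beta> k)\<^sup>2 / d2 k))"
proof -
  have "exposure = (\<Sum>k\<in>support. \<beta> k * w k)"
    unfolding exposure_def using weight_eq_zero_off_support
    by (intro sum.mono_neutral_right) (auto simp: support_def)
  also have "\<dots> = (\<Sum>k\<in>support. min_var * (\<beta> k / d2 k) - s2 * exposure * ((\<beta> k)\<^sup>2 / d2 k))"
  proof (intro sum.cong refl)
    fix k
    assume k: "k \<in> support"
    then have "d2 k > 0"
      using d2_pos by (simp add: support_def)
    have "d2 k * w k = min_var - s2 * \<beta> k * exposure"
      using marginal_on_support[OF k] by simp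
    have "\<beta> k * w k = \<beta> k * (d2 k * w k) / d2 k"
      using \<open>d2 k > 0\<close> by simp
    also have "\<dots> = \<beta> k * (min_var - s2 * \<beta> k * exposure) / d2 k"
      by (simp only: \<open>d2 k * w k = min_var - s2 * \<beta> k * exposure\<close>)
    also have "\<dots> = min_var * (\<beta> k / d2 k) - s2 * exposure * ((\<beta> k)\<^sup>2 / d2 k)"
      using \<open>d2 k > 0\<close> by (simp add: field_simps power2_eq_square)
    finally show "\<beta> k * w k = min_var * (\<beta> k / d2 k) - s2 * exposure * ((\<beta> k)\<^sup>2 / d2 k)" .
  qed
  also have "\<dots> = min_var * (\<Sum>k\<in>support. \<beta> k / d2 k) - s2 * exposure * (\<Sum>k\<in>support. (\<beta> k)\<^sup>2 / d2 k)"
    by (simp add: sum_subtractf sum_distrib_left)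
  finally show ?thesis
    by (simp add: algebra_simps)
qed

lemma support_sum_nonneg_iff: "(\<Sum>k\<in>support. \<beta> k / d2 k) \<ge> 0 \<longleftrightarrow> exposure \<ge> 0"
proof -
  have "(\<Sum>k\<in>support. (\<beta> k)\<^sup>2 / d2 k) \<ge> 0"
    using d2_pos by (intro sum_nonneg) (auto simp: support_def less_imp_le)
  then have "1 + s2 * (\<Sum>k\<in>support. (\<beta> k)\<^sup>2 / d2 k) > 0"
    using s2_nonneg by (simp add: add_pos_nonneg)
  have "(\<Sum>k\<in>support. \<beta> k / d2 k) \<ge> 0 \<longleftrightarrow> min_var * (\<Sum>k\<in>support. \<beta> k / d2 k) \<ge> 0"
    using min_var_pos by (simp add: zero_le_mult_iff)
  also have "\<dots> \<longleftrightarrow> exposure \<ge> 0"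
    unfolding min_var_mult_support_sum using \<open>1 + s2 * (\<Sum>k\<in>support. (\<beta> k)\<^sup>2 / d2 k) > 0\<close>
    by (simp add: zero_le_mult_iff)
  finally show ?thesis .
qed

lemma exposure_nonneg:
  assumes "(\<Sum>i=1..p. \<beta> i / d2 i) \<ge> 0"
  shows "exposure \<ge> 0"
proof (rule ccontr)
  assume neg: "\<not> exposure \<ge> 0"
  have "\<beta> j / d2 j \<le> 0" if j: "j \<in> {1..p} - support" for j
  proof -
    have "0 < s2 * \<beta> j * exposure"
      using min_var_pos marginal_off_support[of j] j by simp
    then have "\<beta> j < 0"
      using s2_nonneg neg by (auto simp: zero_less_mult_iff mult_less_0_iff)
    then show ?thesis
      using d2_pos[of j] j by (simp add: divide_neg_pos less_imp_le)
  qed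
  then have "(\<Sum>j\<in>{1..p} - support. \<beta> j / d2 j) \<le> 0"
    by (rule sum_nonpos)
  moreover have "(\<Sum>i=1..p. \<beta> i / d2 i) = (\<Sum>j\<in>{1..p} - support. \<beta> j / d2 j) + (\<Sum>k\<in>support. \<beta> k / d2 k)"
    by (rule sum.subset_diff) (auto simp: support_def)
  ultimately have "(\<Sum>k\<in>support. \<beta> k / d2 k) \<ge> 0"
    using assms by linarith
  with neg show False
    using support_sum_nonneg_iff by simp
qed

lemma support_downward_closed:
  assumes "exposure \<ge> 0"
    and mono: "\<And>i j. 1 \<le> i \<Longrightarrow> i \<le> j \<Longrightarrow> j \<le> p \<Longrightarrow> \<beta> i \<le> \<beta> j"
    and i: "i \<in> support" and "1 \<le> j" "j \<le> i"
  shows "j \<in> support"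
proof (rule ccontr)
  assume "j \<notin> support"
  have "i \<in> {1..p}" "w i > 0" "j \<in> {1..p}"
    using assms by (auto simp: support_def)
  have "min_var \<le> s2 * \<beta> j * exposure"
    using marginal_off_support \<open>j \<in> {1..p}\<close> \<open>j \<notin> support\<close> .
  also have "\<dots> \<le> s2 * \<beta> i * exposure"
    using s2_nonneg assms \<open>i \<in> {1..p}\<close> by (intro mult_right_mono mult_left_mono) auto
  also have "\<dots> < s2 * \<beta> i * exposure + d2 i * w i"
    using d2_pos \<open>i \<in> {1..p}\<close> \<open>w i > 0\<close> by simp
  also have "\<dots> = min_var"
    using marginal_on_support i .
  finally show False
    by simp
qed

end

theorem lemma2:
  fixes p :: nat and s2 :: real and \<beta> d2 w :: "nat \<Rightarrow> real"
  assumes "s2 > 0"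
    and "\<exists>i\<in>{1..p}. \<beta> i \<noteq> 0"
    and "\<And>i j. 1 \<le> i \<Longrightarrow> i \<le> j \<Longrightarrow> j \<le> p \<Longrightarrow> \<beta> i \<le> \<beta> j"
    and "\<And>i. i \<in> {1..p} \<Longrightarrow> d2 i > 0"
    and "(\<Sum>i=1..p. \<beta> i / d2 i) \<ge> 0"
    and "is_LO_minvar p (one_factor_cov s2 \<beta> d2) w"
  shows "{i\<in>{1..p}. w i > 0} = {1..card {i\<in>{1..p}. w i > 0}}
         \<and> (\<Sum>j\<in>{i\<in>{1..p}. w i > 0}. \<beta> j / d2 j) \<ge> 0"
proof -
  interpret one_factor_LO_minvar p s2 \<beta> d2 w
    using assms by unfold_locales auto
  have "exposure \<ge> 0"
    using assms(5) by (rule exposure_nonneg)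
  have "support = {1..card support}"
    using support_downward_closed[OF \<open>exposure \<ge> 0\<close> assms(3)]
    by (intro eq_atLeastAtMost_card_if_downward_closed[of _ p]) (auto simp: support_def)
  moreover have "(\<Sum>k\<in>support. \<beta> k / d2 k) \<ge> 0"
    using \<open>exposure \<ge> 0\<close> support_sum_nonneg_iff by simp
  ultimately show ?thesis
    unfolding support_def by simp
qed

end
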